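(* Let $d\geq 2$ and let $\rho^s=\sum_{i,j=0}^{d-1}\rho^s_{ij}|i\rangle\langle j|$ be a state on $H_d=\mathbb{C}^d$. If for some $i\neq j$ $$|\rho^s_{ij}|>\frac{\sqrt{1-(\rho^s_{ii}+\rho^s_{jj})^2}}{2},$$ then there exists an incoherent operation $\Lambda$ on $H_d\otimes H_d$ such that $\Lambda(\rho^s\otimes|0\rangle\langle 0|)$ violates a Bell inequality (and hence is Bell-nonlocal).
   Context: Coherence is taken with respect to the computational basis $\{|0\rangle,\dots,|d-1\rangle\}$ of $H_d$ and the product computational basis of $H_d\otimes H_d$. The set $\mathcal{I}$ of incoherent states consists of the states diagonal in this basis. An incoherent operation is a completely positive trace-preserving map $\Lambda(\rho)=\sum_k K_k\rho K_k^\dagger$ with $K_k\mathcal{I}K_k^\dagger\subseteq\mathcal{I}$ for every Kraus operator $K_k$. A state is Bell-nonlocal if its measurement statistics do not admit a local hidden variable model. *)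

theory Defs
  imports Complex_Main
begin

text \<open>Matrices on C^n are represented as functions nat => nat => complex; only
  entries with both indices below n are meaningful. The computational basis of
  H_d (x) H_d is |a>|b> |-> index a*d+b.\<close>

type_synonym cmat = "nat \<Rightarrow> nat \<Rightarrow> complex"

definition mmul :: "nat \<Rightarrow> cmat \<Rightarrow> cmat \<Rightarrow> cmat" where
  "mmul n A B = (\<lambda>i j. \<Sum>k<n. A i k * B k j)"

definition adj :: "cmat \<Rightarrow> cmat" where
  "adj A = (\<lambda>i j. cnj (A j i))"

definition idm :: cmat where
  "idm = (\<lambda>i j. if i = j then 1 else 0)"

definition tr :: "nat \<Rightarrow> cmat \<Rightarrow> complex" where
  "tr n A = (\<Sum>i<n. A i i)"

definition hermitian :: "nat \<Rightarrow> cmat \<Rightarrow> bool" where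
  "hermitian n A \<longleftrightarrow> (\<forall>i<n. \<forall>j<n. A i j = cnj (A j i))"

definition psd :: "nat \<Rightarrow> cmat \<Rightarrow> bool" where
  "psd n A \<longleftrightarrow> hermitian n A \<and>
     (\<forall>v :: nat \<Rightarrow> complex. 0 \<le> Re (\<Sum>i<n. \<Sum>j<n. cnj (v i) * A i j * v j))"

definition is_state :: "nat \<Rightarrow> cmat \<Rightarrow> bool" where
  "is_state n \<rho> \<longleftrightarrow> psd n \<rho> \<and> tr n \<rho> = 1"

definition is_diag :: "nat \<Rightarrow> cmat \<Rightarrow> bool" where
  "is_diag n A \<longleftrightarrow> (\<forall>i<n. \<forall>j<n. i \<noteq> j \<longrightarrow> A i j = 0)"

definition incoherent_state :: "nat \<Rightarrow> cmat \<Rightarrow> bool" where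
  "incoherent_state n \<sigma> \<longleftrightarrow> is_state n \<sigma> \<and> is_diag n \<sigma>"

definition kron :: "nat \<Rightarrow> cmat \<Rightarrow> cmat \<Rightarrow> cmat" where
  "kron d A B = (\<lambda>p q. A (p div d) (q div d) * B (p mod d) (q mod d))"

definition proj0 :: cmat where
  "proj0 = (\<lambda>i j. if i = 0 \<and> j = 0 then 1 else 0)"

definition kraus_apply :: "nat \<Rightarrow> cmat list \<Rightarrow> cmat \<Rightarrow> cmat" where
  "kraus_apply n Ks \<rho> = (\<lambda>i j. \<Sum>K\<leftarrow>Ks. mmul n (mmul n K \<rho>) (adj K) i j)"

definition incoherent_kraus :: "nat \<Rightarrow> cmat list \<Rightarrow> bool" where
  "incoherent_kraus n Ks \<longleftrightarrow>
     (\<forall>i<n. \<forall>j<n. (\<Sum>K\<leftarrow>Ks. mmul n (adj K) K i j) = idm i j) \<and>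
     (\<forall>K\<in>set Ks. \<forall>\<sigma>. incoherent_state n \<sigma> \<longrightarrow> is_diag n (mmul n (mmul n K \<sigma>) (adj K)))"

definition povm :: "nat \<Rightarrow> nat \<Rightarrow> (nat \<Rightarrow> cmat) \<Rightarrow> bool" where
  "povm n k M \<longleftrightarrow> (\<forall>a<k. psd n (M a)) \<and>
     (\<forall>i<n. \<forall>j<n. (\<Sum>a<k. M a i j) = idm i j)"

definition qprob :: "nat \<Rightarrow> cmat \<Rightarrow> (nat \<Rightarrow> nat \<Rightarrow> cmat) \<Rightarrow> (nat \<Rightarrow> nat \<Rightarrow> cmat)
    \<Rightarrow> nat \<Rightarrow> nat \<Rightarrow> nat \<Rightarrow> nat \<Rightarrow> real" where
  "qprob d \<rho> MA MB a b x y = Re (tr (d * d) (mmul (d * d) (kron d (MA x a) (MB y b)) \<rho>))"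

definition lhv :: "nat \<Rightarrow> nat \<Rightarrow> nat \<Rightarrow> nat \<Rightarrow> (nat \<Rightarrow> nat \<Rightarrow> nat \<Rightarrow> nat \<Rightarrow> real) \<Rightarrow> bool" where
  "lhv mA mB oA oB P \<longleftrightarrow>
    (\<exists>(m::nat) (q::nat \<Rightarrow> real) (pA::nat \<Rightarrow> nat \<Rightarrow> nat \<Rightarrow> real) (pB::nat \<Rightarrow> nat \<Rightarrow> nat \<Rightarrow> real).
       (\<forall>l<m. 0 \<le> q l) \<and> (\<Sum>l<m. q l) = 1 \<and>
       (\<forall>x<mA. \<forall>l<m. (\<forall>a<oA. 0 \<le> pA x l a) \<and> (\<Sum>a<oA. pA x l a) = 1) \<and>
       (\<forall>y<mB. \<forall>l<m. (\<forall>b<oB. 0 \<le> pB y l b) \<and> (\<Sum>b<oB. pB y l b) = 1) \<and>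
       (\<forall>x<mA. \<forall>y<mB. \<forall>a<oA. \<forall>b<oB.
          P a b x y = (\<Sum>l<m. q l * pA x l a * pB y l b)))"

definition bell_nonlocal :: "nat \<Rightarrow> cmat \<Rightarrow> bool" where
  "bell_nonlocal d \<rho> \<longleftrightarrow>
    (\<exists>mA mB oA oB MA MB. (\<forall>x<mA. povm d oA (MA x)) \<and> (\<forall>y<mB. povm d oB (MB y)) \<and>
       \<not> lhv mA mB oA oB (qprob d \<rho> MA MB))"

definition bell_ineq :: "nat \<Rightarrow> nat \<Rightarrow> nat \<Rightarrow> nat \<Rightarrow> (nat \<Rightarrow> nat \<Rightarrow> nat \<Rightarrow> nat \<Rightarrow> real) \<Rightarrow> real \<Rightarrow> bool" where
  "bell_ineq mA mB oA oB c \<beta> \<longleftrightarrow>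
    (\<forall>P. lhv mA mB oA oB P \<longrightarrow>
       (\<Sum>x<mA. \<Sum>y<mB. \<Sum>a<oA. \<Sum>b<oB. c a b x y * P a b x y) \<le> \<beta>)"

definition violates_bell_inequality :: "nat \<Rightarrow> cmat \<Rightarrow> bool" where
  "violates_bell_inequality d \<rho> \<longleftrightarrow>
    (\<exists>mA mB oA oB MA MB c \<beta>. (\<forall>x<mA. povm d oA (MA x)) \<and> (\<forall>y<mB. povm d oB (MB y)) \<and>
       bell_ineq mA mB oA oB c \<beta> \<and>
       (\<Sum>x<mA. \<Sum>y<mB. \<Sum>a<oA. \<Sum>b<oB. c a b x y * qprob d \<rho> MA MB a b x y) > \<beta>)"

end

theory Submission
  imports Defs
begin

(* Let I = |i>|0>, J = |j>|0> and e = |1>|1> (index d + 1), and let u be the phase of rho_ij.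
  The Kraus operators |0><I| + u |e><J| and |0><m| for the remaining basis vectors m have at
  most one nonzero entry per column, so they form an incoherent operation. It maps
  rho (x) |0><0| to the two-qubit state on span {|00>, |11>} with populations 1 - rho_jj and
  rho_jj and real coherence r = |rho_ij|. For suitable Z-X plane measurements its CHSH value
  is (2 + 6 r^2) / (1 + r^2), which exceeds the local bound 2 as soon as r > 0. Thus the
  hypothesis is only used to ensure rho_ij ~= 0: the diagonal of a state lies in [0, 1] with
  rho_ii + rho_jj <= 1, so the square root in the bound is nonnegative. *)

lemma sum_lessThan_single:
  fixes f :: "nat \<Rightarrow> 'a::comm_monoid_add"
  assumes "a < n" and "\<And>k. k < n \<Longrightarrow> k \<noteq> a \<Longrightarrow> f k = 0"
  shows "(\<Sum>k<n. f k) = f a"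
proof -
  have "(\<Sum>k<n. f k) = (\<Sum>k\<in>{a}. f k)"
    using assms by (intro sum.mono_neutral_right) auto
  then show ?thesis by simp
qed

lemma sum_lessThan_pair:
  fixes f :: "nat \<Rightarrow> 'a::comm_monoid_add"
  assumes "a < n" "b < n" "a \<noteq> b" and "\<And>k. k < n \<Longrightarrow> k \<noteq> a \<Longrightarrow> k \<noteq> b \<Longrightarrow> f k = 0"
  shows "(\<Sum>k<n. f k) = f a + f b"
proof -
  have "(\<Sum>k<n. f k) = (\<Sum>k\<in>{a, b}. f k)"
    using assms by (intro sum.mono_neutral_right) auto
  then show ?thesis using \<open>a \<noteq> b\<close> by simp
qed

lemma add_one_less_square:
  fixes d :: nat
  assumes "d \<ge> 2"
  shows "d + 1 < d * d"
proof -
  have "2 * d \<le> d * d" using assms by simp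
  then show ?thesis using assms by linarith
qed

lemma real_quadratic_form_nonneg:
  fixes a b g x y :: real
  assumes "0 \<le> a" "0 \<le> b" "g\<^sup>2 \<le> a * b"
  shows "0 \<le> a * x\<^sup>2 + b * y\<^sup>2 + 2 * g * x * y"
proof (cases "a = 0")
  case True
  then have "g = 0" using assms by simp
  then show ?thesis using True assms by simp
next
  case False
  then have "a > 0" using assms by simp
  have "a * (a * x\<^sup>2 + b * y\<^sup>2 + 2 * g * x * y) = (a * x + g * y)\<^sup>2 + (a * b - g\<^sup>2) * y\<^sup>2"
    by (simp add: power2_eq_square algebra_simps)
  also have "\<dots> \<ge> 0" using assms by simp
  finally show ?thesis using \<open>a > 0\<close> by (simp add: zero_le_mult_iff)
qed

definition qubit_block :: "real \<Rightarrow> real \<Rightarrow> real \<Rightarrow> real \<Rightarrow> cmat" where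
  "qubit_block \<alpha> \<beta> \<gamma> e = (\<lambda>p q. complex_of_real
     (if p = 0 \<and> q = 0 then \<alpha> else if p = 1 \<and> q = 1 then \<beta>
      else if (p = 0 \<and> q = 1) \<or> (p = 1 \<and> q = 0) then \<gamma> else if p = q then e else 0))"

lemma qubit_block_mult_vector:
  assumes "n \<ge> 2" "p < n"
  shows "(\<Sum>q<n. qubit_block \<alpha> \<beta> \<gamma> e p q * v q) =
    (if p = 0 then of_real \<alpha> * v 0 + of_real \<gamma> * v 1
     else if p = 1 then of_real \<gamma> * v 0 + of_real \<beta> * v 1 else of_real e * v p)"
proof -
  consider "p = 0" | "p = 1" | "p \<ge> 2" by linarith
  then show ?thesis
  proof cases
    case 1
    then show ?thesis using assms
      by (subst sum_lessThan_pair[of 0 _ 1]) (auto simp: qubit_block_def)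
  next
    case 2
    then show ?thesis using assms
      by (subst sum_lessThan_pair[of 0 _ 1]) (auto simp: qubit_block_def)
  next
    case 3
    then show ?thesis using assms
      by (subst sum_lessThan_single[of p]) (auto simp: qubit_block_def)
  qed
qed

lemma psd_qubit_block:
  assumes "n \<ge> 2" "0 \<le> \<alpha>" "0 \<le> \<beta>" "\<gamma>\<^sup>2 \<le> \<alpha> * \<beta>" "0 \<le> e"
  shows "psd n (qubit_block \<alpha> \<beta> \<gamma> e)"
  unfolding psd_def
proof (intro conjI allI)
  show "hermitian n (qubit_block \<alpha> \<beta> \<gamma> e)"
    unfolding hermitian_def qubit_block_def by auto
  fix v :: "nat \<Rightarrow> complex"
  define w where "w p = cnj (v p) * (\<Sum>q<n. qubit_block \<alpha> \<beta> \<gamma> e p q * v q)" for p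
  have form: "(\<Sum>p<n. \<Sum>q<n. cnj (v p) * qubit_block \<alpha> \<beta> \<gamma> e p q * v q) = (\<Sum>p<n. w p)"
    unfolding w_def by (simp add: sum_distrib_left mult.assoc)
  have "(\<Sum>p<n. w p) = w 0 + w 1 + (\<Sum>p\<in>{2..<n}. w p)"
  proof -
    have "{..<n} = insert 0 (insert 1 {2..<n})" using assms(1) by auto
    then show ?thesis by (simp add: add.assoc)
  qed
  moreover have "Re (w 0 + w 1) =
      (\<alpha> * (Re (v 0))\<^sup>2 + \<beta> * (Re (v 1))\<^sup>2 + 2 * \<gamma> * Re (v 0) * Re (v 1))
    + (\<alpha> * (Im (v 0))\<^sup>2 + \<beta> * (Im (v 1))\<^sup>2 + 2 * \<gamma> * Im (v 0) * Im (v 1))"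
  proof -
    have "w 0 = cnj (v 0) * (of_real \<alpha> * v 0 + of_real \<gamma> * v 1)"
      "w 1 = cnj (v 1) * (of_real \<gamma> * v 0 + of_real \<beta> * v 1)"
      using assms(1) by (simp_all add: w_def qubit_block_mult_vector)
    then show ?thesis by (simp add: power2_eq_square algebra_simps)
  qed
  moreover have "0 \<le> Re (w p)" if "p \<in> {2..<n}" for p
  proof -
    have "w p = of_real e * (cnj (v p) * v p)"
      using that by (simp add: w_def qubit_block_mult_vector)
    then show ?thesis using assms(5) by simp
  qed
  moreover note real_quadratic_form_nonneg[OF assms(2-4)]
  ultimately have "0 \<le> Re (w 0 + w 1) + Re (\<Sum>p\<in>{2..<n}. w p)"
    unfolding Re_sum by (intro add_nonneg_nonneg sum_nonneg) simp_all
  then show "0 \<le> Re (\<Sum>p<n. \<Sum>q<n. cnj (v p) * qubit_block \<alpha> \<beta> \<gamma> e p q * v q)"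
    unfolding form \<open>(\<Sum>p<n. w p) = _\<close> by simp
qed

definition chsh :: "nat \<Rightarrow> nat \<Rightarrow> nat \<Rightarrow> nat \<Rightarrow> real" where
  "chsh a b x y = (if a = b then 1 else -1) * (if x = 1 \<and> y = 1 then -1 else 1)"

definition correlator :: "(nat \<Rightarrow> nat \<Rightarrow> nat \<Rightarrow> nat \<Rightarrow> real) \<Rightarrow> nat \<Rightarrow> nat \<Rightarrow> real" where
  "correlator P x y = (\<Sum>a<2. \<Sum>b<2. (if a = b then 1 else -1) * P a b x y)"

lemma chsh_sum_eq_correlators:
  "(\<Sum>x<2. \<Sum>y<2. \<Sum>a<2. \<Sum>b<2. chsh a b x y * P a b x y) =
     correlator P 0 0 + correlator P 0 1 + correlator P 1 0 - correlator P 1 1"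
  by (simp add: numeral_2_eq_2 chsh_def correlator_def)

lemma chsh_local_bound:
  fixes a0 a1 b0 b1 :: real
  assumes "\<bar>a0\<bar> \<le> 1" "\<bar>a1\<bar> \<le> 1" "\<bar>b0\<bar> \<le> 1" "\<bar>b1\<bar> \<le> 1"
  shows "a0 * b0 + a0 * b1 + a1 * b0 - a1 * b1 \<le> 2"
proof -
  have "a0 * (b0 + b1) \<le> \<bar>b0 + b1\<bar>"
    using assms(1) abs_mult[of a0 "b0 + b1"] mult_right_mono[of "\<bar>a0\<bar>" 1 "\<bar>b0 + b1\<bar>"]
    by (smt (verit) abs_ge_self)
  moreover have "a1 * (b0 - b1) \<le> \<bar>b0 - b1\<bar>"
    using assms(2) abs_mult[of a1 "b0 - b1"] mult_right_mono[of "\<bar>a1\<bar>" 1 "\<bar>b0 - b1\<bar>"]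
    by (smt (verit) abs_ge_self)
  moreover have "\<bar>b0 + b1\<bar> + \<bar>b0 - b1\<bar> \<le> 2" using assms(3,4) by linarith
  ultimately show ?thesis by (simp add: algebra_simps)
qed

lemma correlator_lhv:
  assumes "\<And>a b. a < 2 \<Longrightarrow> b < 2 \<Longrightarrow> P a b x y = (\<Sum>l<m. q l * pA x l a * pB y l b)"
  shows "correlator P x y = (\<Sum>l<m. q l * (pA x l 0 - pA x l 1) * (pB y l 0 - pB y l 1))"
  using assms by (simp add: correlator_def numeral_2_eq_2 sum_distrib_left
      sum_subtractf[symmetric] sum.distrib[symmetric] algebra_simps)

lemma bell_ineq_chsh: "bell_ineq 2 2 2 2 chsh 2"
  unfolding bell_ineq_def
proof (intro allI impI)
  fix P assume "lhv 2 2 2 2 P"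
  then obtain m :: nat and q :: "nat \<Rightarrow> real" and pA pB :: "nat \<Rightarrow> nat \<Rightarrow> nat \<Rightarrow> real"
    where q: "\<forall>l<m. 0 \<le> q l" "(\<Sum>l<m. q l) = 1"
    and pA: "\<forall>x<2. \<forall>l<m. (\<forall>a<2. 0 \<le> pA x l a) \<and> (\<Sum>a<2. pA x l a) = 1"
    and pB: "\<forall>y<2. \<forall>l<m. (\<forall>b<2. 0 \<le> pB y l b) \<and> (\<Sum>b<2. pB y l b) = 1"
    and P: "\<forall>x<2. \<forall>y<2. \<forall>a<2. \<forall>b<2. P a b x y = (\<Sum>l<m. q l * pA x l a * pB y l b)"
    unfolding lhv_def by blast
  define A where "A x l = pA x l 0 - pA x l 1" for x l
  define B where "B y l = pB y l 0 - pB y l 1" for y l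
  have A: "\<bar>A x l\<bar> \<le> 1" if "x < 2" "l < m" for x l
  proof -
    have "0 \<le> pA x l 0" "0 \<le> pA x l 1" "pA x l 0 + pA x l 1 = 1"
      using pA that by (simp_all add: numeral_2_eq_2)
    then show ?thesis unfolding A_def by linarith
  qed
  have B: "\<bar>B y l\<bar> \<le> 1" if "y < 2" "l < m" for y l
  proof -
    have "0 \<le> pB y l 0" "0 \<le> pB y l 1" "pB y l 0 + pB y l 1 = 1"
      using pB that by (simp_all add: numeral_2_eq_2)
    then show ?thesis unfolding B_def by linarith
  qed
  have E: "correlator P x y = (\<Sum>l<m. q l * A x l * B y l)" if "x < 2" "y < 2" for x y
    unfolding A_def B_def using P that by (intro correlator_lhv) simp
  have "(\<Sum>x<2. \<Sum>y<2. \<Sum>a<2. \<Sum>b<2. chsh a b x y * P a b x y) =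
      (\<Sum>l<m. q l * (A 0 l * B 0 l + A 0 l * B 1 l + A 1 l * B 0 l - A 1 l * B 1 l))"
    unfolding chsh_sum_eq_correlators by (simp add: E sum_subtractf[symmetric] sum.distrib[symmetric] algebra_simps)
  also have "\<dots> \<le> (\<Sum>l<m. q l * 2)"
    using q A B by (intro sum_mono mult_left_mono chsh_local_bound) auto
  also have "\<dots> = 2" using q by (simp add: sum_distrib_right[symmetric])
  finally show "(\<Sum>x<2. \<Sum>y<2. \<Sum>a<2. \<Sum>b<2. chsh a b x y * P a b x y) \<le> 2" .
qed

lemma bell_nonlocal_if_violates_bell_inequality:
  assumes "violates_bell_inequality d \<rho>"
  shows "bell_nonlocal d \<rho>"
proof -
  from assms obtain mA mB oA oB MA MB c \<beta> where
    povms: "\<forall>x<mA. povm d oA (MA x)" "\<forall>y<mB. povm d oB (MB y)"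
    and "bell_ineq mA mB oA oB c \<beta>"
    and "(\<Sum>x<mA. \<Sum>y<mB. \<Sum>a<oA. \<Sum>b<oB. c a b x y * qprob d \<rho> MA MB a b x y) > \<beta>"
    unfolding violates_bell_inequality_def by blast
  then have "\<not> lhv mA mB oA oB (qprob d \<rho> MA MB)"
    unfolding bell_ineq_def by force
  then show ?thesis unfolding bell_nonlocal_def using povms by blast
qed

definition qubit_povm :: "real \<Rightarrow> real \<Rightarrow> real \<Rightarrow> nat \<Rightarrow> cmat" where
  "qubit_povm \<alpha> \<beta> \<gamma> a =
     (if a = 0 then qubit_block \<alpha> \<beta> \<gamma> 1 else qubit_block (1 - \<alpha>) (1 - \<beta>) (- \<gamma>) 0)"

lemma povm_qubit_povm:
  assumes "n \<ge> 2" "0 \<le> \<alpha>" "\<alpha> \<le> 1" "0 \<le> \<beta>" "\<beta> \<le> 1"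
    and "\<gamma>\<^sup>2 \<le> \<alpha> * \<beta>" "\<gamma>\<^sup>2 \<le> (1 - \<alpha>) * (1 - \<beta>)"
  shows "povm n 2 (qubit_povm \<alpha> \<beta> \<gamma>)"
  unfolding povm_def
proof (intro conjI allI impI)
  fix a :: nat assume "a < 2"
  then show "psd n (qubit_povm \<alpha> \<beta> \<gamma> a)"
    using assms by (auto simp: qubit_povm_def intro!: psd_qubit_block)
next
  fix p q
  show "(\<Sum>a<2. qubit_povm \<alpha> \<beta> \<gamma> a p q) = idm p q"
    by (simp add: numeral_2_eq_2 qubit_povm_def qubit_block_def idm_def)
qed

(* Indices 0 and e stand for |00> and |11>; on H_d (x) H_d, e = d + 1. *)
definition x_state :: "nat \<Rightarrow> complex \<Rightarrow> complex \<Rightarrow> complex \<Rightarrow> cmat" where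
  "x_state e a c b = (\<lambda>k p.
     if k = 0 \<and> p = 0 then a else if k = 0 \<and> p = e then c
     else if k = e \<and> p = 0 then cnj c else if k = e \<and> p = e then b else 0)"

lemma tr_mmul_x_state:
  assumes "e < n" "e \<noteq> 0"
  shows "tr n (mmul n G (x_state e a c b)) = G 0 0 * a + G 0 e * cnj c + G e 0 * c + G e e * b"
proof -
  have row: "(\<Sum>k<n. G p k * x_state e a c b k p) = G p 0 * x_state e a c b 0 p + G p e * x_state e a c b e p"
    if "p < n" for p
    using assms by (intro sum_lessThan_pair) (auto simp: x_state_def)
  have "tr n (mmul n G (x_state e a c b)) = (\<Sum>p<n. G p 0 * x_state e a c b 0 p + G p e * x_state e a c b e p)"
    unfolding tr_def mmul_def by (simp add: row)
  also have "\<dots> = G 0 0 * a + G 0 e * cnj c + G e 0 * c + G e e * b"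
    using assms by (subst sum_lessThan_pair[of 0 _ e]) (auto simp: x_state_def)
  finally show ?thesis .
qed

lemma qprob_x_state:
  assumes "d \<ge> 2"
    and \<sigma>: "\<And>k p. k < d * d \<Longrightarrow> p < d * d \<Longrightarrow> \<sigma> k p = x_state (d + 1) a c b k p"
    and "MA x u = qubit_block \<alpha>1 \<beta>1 \<gamma>1 e1" "MB y v = qubit_block \<alpha>2 \<beta>2 \<gamma>2 e2"
  shows "qprob d \<sigma> MA MB u v x y = \<alpha>1 * \<alpha>2 * Re a + 2 * \<gamma>1 * \<gamma>2 * Re c + \<beta>1 * \<beta>2 * Re b"
proof -
  have "d + 1 < d * d"
    using assms(1) by (rule add_one_less_square)
  have "(d + 1) div d = 1" "(d + 1) mod d = 1"
    using assms(1) by (simp_all add: le_div_geq le_mod_geq)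
  have "tr (d * d) (mmul (d * d) (kron d (MA x u) (MB y v)) \<sigma>)
      = tr (d * d) (mmul (d * d) (kron d (MA x u) (MB y v)) (x_state (d + 1) a c b))"
    unfolding tr_def mmul_def using \<sigma> by simp
  also have "\<dots> = of_real (\<alpha>1 * \<alpha>2) * a + of_real (\<gamma>1 * \<gamma>2) * (c + cnj c) + of_real (\<beta>1 * \<beta>2) * b"
    using \<open>d + 1 < d * d\<close> \<open>(d + 1) div d = 1\<close> \<open>(d + 1) mod d = 1\<close> assms(3,4)
    by (simp add: tr_mmul_x_state kron_def qubit_block_def algebra_simps)
  finally show ?thesis unfolding qprob_def by simp
qed

lemma correlator_qubit_povms_x_state:
  assumes "d \<ge> 2"
    and "\<And>k p. k < d * d \<Longrightarrow> p < d * d \<Longrightarrow> \<sigma> k p = x_state (d + 1) a c b k p"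
    and "MA x = qubit_povm \<alpha>1 \<beta>1 \<gamma>1" "MB y = qubit_povm \<alpha>2 \<beta>2 \<gamma>2"
  shows "correlator (qprob d \<sigma> MA MB) x y =
    (2 * \<alpha>1 - 1) * (2 * \<alpha>2 - 1) * Re a + 8 * \<gamma>1 * \<gamma>2 * Re c + (2 * \<beta>1 - 1) * (2 * \<beta>2 - 1) * Re b"
  using assms
  by (simp add: correlator_def numeral_2_eq_2 qubit_povm_def qprob_x_state algebra_simps)

lemma x_state_violates_bell_inequality:
  assumes "d \<ge> 2" and "Re a + Re b = 1" and "Re c \<noteq> 0"
    and \<sigma>: "\<And>k p. k < d * d \<Longrightarrow> p < d * d \<Longrightarrow> \<sigma> k p = x_state (d + 1) a c b k p"
  shows "violates_bell_inequality d \<sigma>"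
proof -
  define t where "t = Re c"
  define MA where "MA x = (if x = 0 then qubit_povm 1 0 0 else qubit_povm (1/2) (1/2) (1/2))" for x :: nat
  \<comment> \<open>Alice measures Z and X, Bob along (cos th, +-sin th) in the Z-X plane with tan (th/2) = t.\<close>
  define MB where "MB y = qubit_povm (1 / (1 + t\<^sup>2)) (t\<^sup>2 / (1 + t\<^sup>2))
      ((if y = 0 then 1 else -1) * t / (1 + t\<^sup>2))" for y :: nat
  have "1 + t\<^sup>2 > 0" by (simp add: add_pos_nonneg)
  have povm_A: "\<forall>x<2. povm d 2 (MA x)"
    using assms(1) by (auto simp: MA_def power2_eq_square intro!: povm_qubit_povm)
  have povm_B: "\<forall>y<2. povm d 2 (MB y)"
    unfolding MB_def using assms(1) \<open>1 + t\<^sup>2 > 0\<close>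
    by (auto intro!: povm_qubit_povm simp: power2_eq_square field_simps)
  have E0: "correlator (qprob d \<sigma> MA MB) 0 y = (1 - t\<^sup>2) / (1 + t\<^sup>2)" for y
  proof -
    have "correlator (qprob d \<sigma> MA MB) 0 y
        = (2 * (1 / (1 + t\<^sup>2)) - 1) * Re a - (2 * (t\<^sup>2 / (1 + t\<^sup>2)) - 1) * Re b"
      by (simp add: correlator_qubit_povms_x_state[OF assms(1) \<sigma>] MA_def MB_def algebra_simps)
    also have "\<dots> = (1 - t\<^sup>2) / (1 + t\<^sup>2) * (Re a + Re b)"
    proof -
      have bloch: "2 * (1 / (1 + t\<^sup>2)) - 1 = (1 - t\<^sup>2) / (1 + t\<^sup>2)"
        "2 * (t\<^sup>2 / (1 + t\<^sup>2)) - 1 = - ((1 - t\<^sup>2) / (1 + t\<^sup>2))"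
        using \<open>1 + t\<^sup>2 > 0\<close> by (simp_all add: field_simps)
      show ?thesis unfolding bloch by (simp add: distrib_left)
    qed
    finally show ?thesis using assms(2) by simp
  qed
  have E1: "correlator (qprob d \<sigma> MA MB) 1 y = (if y = 0 then 1 else -1) * 4 * t\<^sup>2 / (1 + t\<^sup>2)" for y
    by (simp add: correlator_qubit_povms_x_state[OF assms(1) \<sigma>] MA_def MB_def t_def power2_eq_square)
  have "t \<noteq> 0" using assms(3) by (simp add: t_def)
  have "(\<Sum>x<2. \<Sum>y<2. \<Sum>u<2. \<Sum>v<2. chsh u v x y * qprob d \<sigma> MA MB u v x y)
      = (2 + 6 * t\<^sup>2) / (1 + t\<^sup>2)"
    unfolding chsh_sum_eq_correlators E0 E1 by (simp add: add_divide_distrib diff_divide_distrib)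
  also have "\<dots> > 2"
    using \<open>1 + t\<^sup>2 > 0\<close> \<open>t \<noteq> 0\<close> by (simp add: field_simps)
  finally show ?thesis
    unfolding violates_bell_inequality_def using povm_A povm_B bell_ineq_chsh by blast
qed

lemma is_diag_conj_if_columns_monomial:
  assumes K: "\<And>k p q. k < n \<Longrightarrow> p < n \<Longrightarrow> q < n \<Longrightarrow> p \<noteq> q \<Longrightarrow> K p k * cnj (K q k) = 0"
    and "is_diag n \<sigma>"
  shows "is_diag n (mmul n (mmul n K \<sigma>) (adj K))"
  unfolding is_diag_def
proof (intro allI impI)
  fix p q assume pq: "p < n" "q < n" "p \<noteq> q"
  have col: "(\<Sum>k<n. K p k * \<sigma> k l) = K p l * \<sigma> l l" if "l < n" for l
    using that \<open>is_diag n \<sigma>\<close> unfolding is_diag_def by (intro sum_lessThan_single) auto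
  have "mmul n (mmul n K \<sigma>) (adj K) p q = (\<Sum>l<n. \<sigma> l l * (K p l * cnj (K q l)))"
    unfolding mmul_def adj_def by (intro sum.cong) (simp_all add: col)
  also have "\<dots> = 0" using K pq by (intro sum.neutral) auto
  finally show "mmul n (mmul n K \<sigma>) (adj K) p q = 0" .
qed

definition pair_kraus :: "nat \<Rightarrow> nat \<Rightarrow> nat \<Rightarrow> complex \<Rightarrow> cmat" where
  "pair_kraus I J e u = (\<lambda>p k. if p = 0 \<and> k = I then 1 else if p = e \<and> k = J then u else 0)"

(* The zero operator for m = I or m = J, so that the Kraus list may range over all m < n. *)
definition reset_kraus :: "nat \<Rightarrow> nat \<Rightarrow> nat \<Rightarrow> cmat" where
  "reset_kraus I J m = (\<lambda>p k. if m \<noteq> I \<and> m \<noteq> J \<and> p = 0 \<and> k = m then 1 else 0)"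

definition pair_to_qubit_kraus :: "nat \<Rightarrow> nat \<Rightarrow> nat \<Rightarrow> nat \<Rightarrow> complex \<Rightarrow> cmat list" where
  "pair_to_qubit_kraus n I J e u = pair_kraus I J e u # map (reset_kraus I J) [0..<n]"

lemma sum_list_map_pair_to_qubit_kraus:
  "(\<Sum>K\<leftarrow>pair_to_qubit_kraus n I J e u. f K) = f (pair_kraus I J e u) + (\<Sum>m<n. f (reset_kraus I J m))"
  by (simp add: pair_to_qubit_kraus_def sum_set_upt_conv_sum_list_nat[symmetric] atLeast0LessThan comp_def)

context
  fixes n I J e :: nat and u :: complex
  assumes I: "I < n" and J: "J < n" and IJ: "I \<noteq> J" and e: "e < n" "e \<noteq> 0"
begin

lemma mmul_pair_kraus:
  "mmul n (pair_kraus I J e u) R p l = (if p = 0 then R I l else if p = e then u * R J l else 0)"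
proof -
  consider "p = 0" | "p = e" | "p \<noteq> 0" "p \<noteq> e" by blast
  then show ?thesis
  proof cases
    case 1
    then show ?thesis unfolding mmul_def using I e
      by (subst sum_lessThan_single[where a = I]) (auto simp: pair_kraus_def)
  next
    case 2
    then show ?thesis unfolding mmul_def using J e
      by (subst sum_lessThan_single[where a = J]) (auto simp: pair_kraus_def)
  qed (simp add: mmul_def pair_kraus_def)
qed

lemma mmul_adj_pair_kraus:
  "mmul n X (adj (pair_kraus I J e u)) p q = (if q = 0 then X p I else if q = e then X p J * cnj u else 0)"
proof -
  consider "q = 0" | "q = e" | "q \<noteq> 0" "q \<noteq> e" by blast
  then show ?thesis
  proof cases
    case 1
    then show ?thesis unfolding mmul_def adj_def using I e
      by (subst sum_lessThan_single[where a = I]) (auto simp: pair_kraus_def)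
  next
    case 2
    then show ?thesis unfolding mmul_def adj_def using J e
      by (subst sum_lessThan_single[where a = J]) (auto simp: pair_kraus_def)
  qed (simp add: mmul_def adj_def pair_kraus_def)
qed

lemma adj_pair_kraus_mult:
  "mmul n (adj (pair_kraus I J e u)) (pair_kraus I J e u) p q =
     (if p = I \<and> q = I then 1 else if p = J \<and> q = J then cnj u * u else 0)"
  unfolding mmul_def adj_def using e IJ
  by (subst sum_lessThan_pair[where a = 0 and b = e]) (auto simp: pair_kraus_def)

lemma adj_reset_kraus_mult:
  assumes "m < n"
  shows "mmul n (adj (reset_kraus I J m)) (reset_kraus I J m) p q =
    (if m \<noteq> I \<and> m \<noteq> J \<and> p = m \<and> q = m then 1 else 0)"
  unfolding mmul_def adj_def using assms
  by (subst sum_lessThan_single[where a = 0]) (auto simp: reset_kraus_def)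

lemma reset_kraus_conj:
  assumes "m < n"
  shows "mmul n (mmul n (reset_kraus I J m) R) (adj (reset_kraus I J m)) p q =
    (if m \<noteq> I \<and> m \<noteq> J \<and> p = 0 \<and> q = 0 then R m m else 0)"
proof -
  have "mmul n (reset_kraus I J m) R p l = (if m \<noteq> I \<and> m \<noteq> J \<and> p = 0 then R m l else 0)" for l
    unfolding mmul_def using assms by (subst sum_lessThan_single[where a = m]) (auto simp: reset_kraus_def)
  then show ?thesis
    unfolding mmul_def[of n "mmul n (reset_kraus I J m) R"] adj_def using assms
    by (subst sum_lessThan_single[where a = m]) (auto simp: reset_kraus_def)
qed

lemma incoherent_kraus_pair_to_qubit:
  assumes "cnj u * u = 1"
  shows "incoherent_kraus n (pair_to_qubit_kraus n I J e u)"
  unfolding incoherent_kraus_def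
proof (intro conjI ballI allI impI)
  fix p q assume pq: "p < n" "q < n"
  have "(\<Sum>m<n. mmul n (adj (reset_kraus I J m)) (reset_kraus I J m) p q) =
      (if p \<noteq> I \<and> p \<noteq> J \<and> p = q then 1 else 0)"
    using pq by (subst sum_lessThan_single[where a = p]) (auto simp: adj_reset_kraus_mult)
  then show "(\<Sum>K\<leftarrow>pair_to_qubit_kraus n I J e u. mmul n (adj K) K p q) = idm p q"
    using assms IJ by (auto simp: sum_list_map_pair_to_qubit_kraus adj_pair_kraus_mult idm_def)
next
  fix K \<sigma> assume "K \<in> set (pair_to_qubit_kraus n I J e u)" "incoherent_state n \<sigma>"
  then show "is_diag n (mmul n (mmul n K \<sigma>) (adj K))"
    using IJ
    by (intro is_diag_conj_if_columns_monomial)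
      (auto simp: pair_to_qubit_kraus_def pair_kraus_def reset_kraus_def incoherent_state_def)
qed

lemma kraus_apply_pair_to_qubit:
  assumes "cnj u * u = 1" and "R J I = cnj (R I J)" and "p < n" "q < n"
  shows "kraus_apply n (pair_to_qubit_kraus n I J e u) R p q =
    x_state e (tr n R - R J J) (R I J * cnj u) (R J J) p q"
proof -
  have reset: "(\<Sum>m<n. mmul n (mmul n (reset_kraus I J m) R) (adj (reset_kraus I J m)) p q)
      = (if p = 0 \<and> q = 0 then tr n R - R I I - R J J else 0)"
  proof -
    have "tr n R = (\<Sum>m<n. if m \<noteq> I \<and> m \<noteq> J then R m m else 0)
        + (\<Sum>m<n. if m = I then R m m else 0) + (\<Sum>m<n. if m = J then R m m else 0)"
      unfolding tr_def sum.distrib[symmetric] using IJ by (intro sum.cong) auto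
    then have "tr n R = (\<Sum>m<n. if m \<noteq> I \<and> m \<noteq> J then R m m else 0) + R I I + R J J"
      using I J by simp
    then show ?thesis by (simp add: reset_kraus_conj)
  qed
  have "u * R J J * cnj u = R J J" using assms(1) by (simp add: algebra_simps)
  then show ?thesis
    using e assms(2)
    by (simp add: kraus_apply_def sum_list_map_pair_to_qubit_kraus reset mmul_pair_kraus
        mmul_adj_pair_kraus x_state_def mult.commute)
qed

end

lemma state_diag_nonneg:
  assumes "is_state n \<rho>" "a < n"
  shows "0 \<le> Re (\<rho> a a)"
proof -
  define v :: "nat \<Rightarrow> complex" where "v k = (if k = a then 1 else 0)" for k
  have "0 \<le> Re (\<Sum>p<n. \<Sum>q<n. cnj (v p) * \<rho> p q * v q)"
    using assms(1) unfolding is_state_def psd_def by blast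
  also have "(\<Sum>p<n. \<Sum>q<n. cnj (v p) * \<rho> p q * v q) = (\<Sum>q<n. cnj (v a) * \<rho> a q * v q)"
    using assms(2) by (intro sum_lessThan_single) (auto simp: v_def)
  also have "\<dots> = \<rho> a a"
    using assms(2) by (subst sum_lessThan_single[of a]) (auto simp: v_def)
  finally show ?thesis .
qed

lemma state_two_diag_le_one:
  assumes "is_state n \<rho>" "i < n" "j < n" "i \<noteq> j"
  shows "Re (\<rho> i i) + Re (\<rho> j j) \<le> 1"
proof -
  have "(\<Sum>a\<in>{i, j}. Re (\<rho> a a)) \<le> (\<Sum>a<n. Re (\<rho> a a))"
    using assms state_diag_nonneg by (intro sum_mono2) auto
  also have "\<dots> = Re (tr n \<rho>)" by (simp add: tr_def Re_sum)
  finally show ?thesis using assms(1,4) by (simp add: is_state_def)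
qed

lemma tr_kron_proj0:
  assumes "d > 0"
  shows "tr (d * d) (kron d \<rho> proj0) = tr d \<rho>"
proof -
  have "tr (d * d) (kron d \<rho> proj0) = (\<Sum>m\<in>(\<lambda>a. a * d) ` {..<d}. kron d \<rho> proj0 m m)"
    unfolding tr_def
  proof (rule sum.mono_neutral_right)
    show "(\<lambda>a. a * d) ` {..<d} \<subseteq> {..<d * d}" using assms by auto
    show "\<forall>m\<in>{..<d * d} - (\<lambda>a. a * d) ` {..<d}. kron d \<rho> proj0 m m = 0"
    proof
      fix m assume m: "m \<in> {..<d * d} - (\<lambda>a. a * d) ` {..<d}"
      have "m mod d \<noteq> 0"
      proof
        assume "m mod d = 0"
        then have "m = m div d * d" using div_mult_mod_eq[of m d] by simp
        moreover have "m div d < d" using m by (simp add: less_mult_imp_div_less)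
        ultimately show False using m by blast
      qed
      then show "kron d \<rho> proj0 m m = 0" by (simp add: kron_def proj0_def)
    qed
  qed simp
  also have "\<dots> = tr d \<rho>"
    using assms by (subst sum.reindex) (auto simp: inj_on_def tr_def kron_def proj0_def)
  finally show ?thesis .
qed

lemma kron_proj0_basis:
  assumes "d > 0"
  shows "kron d \<rho> proj0 (a * d) (b * d) = \<rho> a b"
  using assms by (simp add: kron_def proj0_def)

lemma sgn_unit_phase:
  fixes z :: complex
  assumes "z \<noteq> 0"
  shows "cnj (sgn z) * sgn z = 1" and "z * cnj (sgn z) = of_real (cmod z)"
proof -
  have "cnj z * z = of_real (cmod z * cmod z)"
    by (metis complex_norm_square mult.commute power2_eq_square complex_mult_cnj)
  then show "cnj (sgn z) * sgn z = 1" "z * cnj (sgn z) = of_real (cmod z)"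
    using assms by (simp_all add: sgn_eq field_simps mult.commute)
qed

lemma state_coherence_bound_nonneg:
  assumes "is_state n \<rho>" "i < n" "j < n" "i \<noteq> j"
  shows "0 \<le> sqrt (1 - (Re (\<rho> i i) + Re (\<rho> j j))\<^sup>2)"
proof -
  have "0 \<le> Re (\<rho> i i) + Re (\<rho> j j)"
    using state_diag_nonneg[OF assms(1)] assms(2,3) by (simp add: add_nonneg_nonneg)
  moreover have "Re (\<rho> i i) + Re (\<rho> j j) \<le> 1"
    using state_two_diag_le_one[OF assms] .
  ultimately show ?thesis by (simp add: power_le_one)
qed

lemma kraus_apply_pair_to_qubit_kron_proj0:
  assumes "d \<ge> 2" "is_state d \<rho>" "i < d" "j < d" "i \<noteq> j" "\<rho> i j \<noteq> 0"
    and "p < d * d" "q < d * d"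
  shows "kraus_apply (d * d) (pair_to_qubit_kraus (d * d) (i * d) (j * d) (d + 1) (sgn (\<rho> i j)))
      (kron d \<rho> proj0) p q = x_state (d + 1) (1 - \<rho> j j) (of_real (cmod (\<rho> i j))) (\<rho> j j) p q"
proof -
  have "d > 0" using assms(1) by simp
  have idx: "i * d < d * d" "j * d < d * d" "i * d \<noteq> j * d" "d + 1 < d * d" "d + 1 \<noteq> 0"
    using assms(1,3-5) add_one_less_square by simp_all
  have "\<rho> j i = cnj (\<rho> i j)"
    using assms(2-4) unfolding is_state_def psd_def hermitian_def by blast
  then have "kron d \<rho> proj0 (j * d) (i * d) = cnj (kron d \<rho> proj0 (i * d) (j * d))"
    using \<open>d > 0\<close> by (simp add: kron_proj0_basis)
  note channel_output =
    kraus_apply_pair_to_qubit[OF idx sgn_unit_phase(1)[OF assms(6)] this assms(7,8)]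
  have "tr (d * d) (kron d \<rho> proj0) = 1"
    using assms(2) \<open>d > 0\<close> by (simp add: tr_kron_proj0 is_state_def)
  then show ?thesis
    using channel_output \<open>d > 0\<close> sgn_unit_phase(2)[OF assms(6)] by (simp add: kron_proj0_basis)
qed

theorem theorem2:
  fixes d :: nat and \<rho> :: cmat and i j :: nat
  assumes "d \<ge> 2"
    and "is_state d \<rho>"
    and "i < d" and "j < d" and "i \<noteq> j"
    and "cmod (\<rho> i j) > sqrt (1 - (Re (\<rho> i i) + Re (\<rho> j j))\<^sup>2) / 2"
  shows "\<exists>Ks. incoherent_kraus (d * d) Ks \<and>
           violates_bell_inequality d (kraus_apply (d * d) Ks (kron d \<rho> proj0)) \<and>
           bell_nonlocal d (kraus_apply (d * d) Ks (kron d \<rho> proj0))"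
proof -
  have "\<rho> i j \<noteq> 0"
    using state_coherence_bound_nonneg[OF assms(2-5)] assms(6) by force
  define Ks where "Ks = pair_to_qubit_kraus (d * d) (i * d) (j * d) (d + 1) (sgn (\<rho> i j))"
  have "d + 1 < d * d" using assms(1) by (rule add_one_less_square)
  then have "incoherent_kraus (d * d) Ks"
    unfolding Ks_def using assms(1,3-5) sgn_unit_phase(1)[OF \<open>\<rho> i j \<noteq> 0\<close>]
    by (intro incoherent_kraus_pair_to_qubit) simp_all
  moreover have "violates_bell_inequality d (kraus_apply (d * d) Ks (kron d \<rho> proj0))"
    using assms(1) \<open>\<rho> i j \<noteq> 0\<close> kraus_apply_pair_to_qubit_kron_proj0[OF assms(1-5) \<open>\<rho> i j \<noteq> 0\<close>]
    unfolding Ks_def by (intro x_state_violates_bell_inequality) auto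
  ultimately show ?thesis using bell_nonlocal_if_violates_bell_inequality by blast
qed

end
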